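(* Fix $A\in\mathbb R$, $T>0$ and $b\ge0$. There is $C=C(A,b,T)$, not depending on $\epsilon$, such that for all sufficiently small $\epsilon>0$, all $t\in[0,\epsilon^{-2}T]$, all $v\in[0,1]$, all $x,y\in\mathbb Z_{\ge0}$ and all integers $n$ with $|n|\le\lceil t^{1/2}\rceil$ and $x+n\ge0$, $$|\mathbf p_t^R(x+n,y)-\mathbf p_t^R(x,y)|\le C\,(1\wedge t^{-(1+v)/2})\,|n|^v\,e^{-b|x-y|(1\wedge t^{-1/2})}.$$ When $b=0$ this holds for all integers $n$ with $x+n\ge0$.
   Context: Let $p_t(x)$, $x\in\mathbb Z$, denote the whole-line semi-discrete heat kernel, i.e. the solution of $\partial_tp_t(x)=\frac12\Delta p_t(x)$, $p_0(x)=1_{\{x=0\}}$, where $\Delta f(x)=f(x+1)+f(x-1)-2f(x)$. For $\epsilon>0$ let $\mu_A=1-A\epsilon$. The half-line Robin heat kernel is, for $t\ge0$ and $x,y\in\mathbb Z_{\ge0}$, $$\mathbf p_t^R(x,y)=p_t(x-y)+\mu_Ap_t(x+y+1)+(1-\mu_A^{-2})\sum_{z=2}^\infty p_t(x+y+z)\mu_A^z.$$ *)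

theory Defs
  imports "HOL-Analysis.Analysis"
begin

definition srw_prob :: "nat \<Rightarrow> int \<Rightarrow> real" where
  "srw_prob k x = (if \<bar>x\<bar> \<le> int k \<and> even (int k + x)
      then real (k choose nat ((int k + \<bar>x\<bar>) div 2)) / 2 ^ k else 0)"

text \<open>Whole-line semi-discrete heat kernel p_t(x): the unique bounded solution of
  d/dt p_t = (1/2) Laplacian p_t with p_0 = indicator of 0, i.e. the transition kernel of the
  continuous-time simple random walk with total jump rate 1 (Poissonised simple random walk).\<close>
definition heat_kernel :: "real \<Rightarrow> int \<Rightarrow> real" where
  "heat_kernel t x = (\<Sum>k. exp (- t) * t ^ k / fact k * srw_prob k x)"

definition muA :: "real \<Rightarrow> real \<Rightarrow> real" where
  "muA A \<epsilon> = 1 - A * \<epsilon>"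

text \<open>Half-line Robin heat kernel; the sum over z \<ge> 2 is reindexed as z = j + 2.\<close>
definition robin_kernel :: "real \<Rightarrow> real \<Rightarrow> real \<Rightarrow> int \<Rightarrow> int \<Rightarrow> real" where
  "robin_kernel A \<epsilon> t x y =
     heat_kernel t (x - y) + muA A \<epsilon> * heat_kernel t (x + y + 1)
     + (1 - (muA A \<epsilon>) powi (-2)) *
       (\<Sum>j. heat_kernel t (x + y + int j + 2) * (muA A \<epsilon>) ^ (j + 2))"

definition min1_pow :: "real \<Rightarrow> real \<Rightarrow> real" where
  "min1_pow t a = (if t = 0 then 1 else min 1 (t powr (- a)))"

end

(*
  With m_t = min 1 (t^(-1/2)), the tilted Fourier representation
    2 pi e^(l x) p_t(x) = integral over [-pi, pi] of exp (t (cosh (l + i th) - 1)) e^(-i x th) dth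
  together with |exp (t (cosh (l + i th) - 1))| <= e^(t (cosh l - 1)) e^(-t (1 - cos th)) gives
    e^(l x) |p_t(x)| <~ e^(t (cosh l - 1)) m_t,
    e^(l x) |p_t(x + n) - p_t(x)| <~ e^(t (cosh l - 1)) m_t^2 |n|      (|n| m_t <= 1),
  and e^(t (cosh l - 1)) stays bounded for tilts |l| <= L m_t. Each of the three terms of the Robin
  kernel is then bounded using the tilt b m_t + 2 |A| eps: the extra rate 2 |A| eps beats the growth
  of mu_A^z, and 1 - mu_A^(-2) = O(eps) compensates the length O(1/eps) of the geometric tail.
  Since t <= T / eps^2 forces eps <~ m_t, all these tilts are of order m_t. The Hoelder bound
  interpolates between the increment bound (|n| m_t <= 1) and twice the sup bound (|n| m_t > 1);
  moving the weight from x + n back to x costs e^(2b) because |n| <= ceil (t^(1/2)).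
*)
theory Submission
  imports Defs
begin

lemma cos_le_quartic: "cos (x::real) \<le> 1 - x^2/2 + x^4/24"
proof -
  obtain s where "cos x = (\<Sum>m<4. cos_coeff m * x ^ m) + cos (s + 1/2 * real 4 * pi) / fact 4 * x ^ 4"
    using Maclaurin_cos_expansion[of x 4] by blast
  moreover have "(\<Sum>m<4. cos_coeff m * x ^ m) = 1 - x^2/2"
    by (simp add: numeral_eq_Suc cos_coeff_def lessThan_Suc) presburger
  moreover have "cos (s + 1/2 * real 4 * pi) * x^4 \<le> 1 * x^4"
    by (rule mult_right_mono) simp_all
  ultimately show ?thesis by (simp add: fact_numeral)
qed

lemma cos_ge_quadratic: "1 - x^2/2 \<le> cos (x::real)"
proof -
  obtain s where "cos x = (\<Sum>m<2. cos_coeff m * x ^ m) + cos (s + 1/2 * real 2 * pi) / fact 2 * x ^ 2"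
    using Maclaurin_cos_expansion[of x 2] by blast
  moreover have "(\<Sum>m<2. cos_coeff m * x ^ m) = 1"
    by (simp add: numeral_eq_Suc cos_coeff_def lessThan_Suc)
  moreover have "(-1) * x^2 \<le> cos (s + 1/2 * real 2 * pi) * x^2"
    by (rule mult_right_mono) simp_all
  ultimately show ?thesis by (simp add: fact_numeral)
qed

lemma one_minus_cos_ge_sq:
  fixes th :: real assumes "\<bar>th\<bar> \<le> pi"
  shows "th^2/16 \<le> 1 - cos th"
proof (cases "\<bar>th\<bar> \<le> 2")
  case True
  have "th^2 \<le> 4"
    using power_mono[OF True, of 2] by simp
  hence "th^2 * th^2 \<le> 4 * th^2"
    by (rule mult_right_mono) simp
  hence "th^4 \<le> 4 * th^2"
    by (simp flip: power_add)
  with cos_le_quartic[of th] zero_le_power2[of th] show ?thesis by linarith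
next
  case False
  have "cos th = cos \<bar>th\<bar>" by simp
  also have "\<dots> \<le> cos (pi/2)"
    using False assms pi_less_4 by (subst cos_mono_le_eq) auto
  finally have "cos th \<le> 0" by simp
  moreover have "\<bar>th\<bar>^2 \<le> 4^2"
    using assms pi_less_4 by (intro power_mono) auto
  ultimately show ?thesis by simp
qed

lemma exp_neg_le_inverse: "(u::real) \<ge> 0 \<Longrightarrow> exp (-u) \<le> 1 / (1 + u)"
  using exp_ge_add_one_self[of u] by (simp add: exp_minus field_simps)

lemma one_plus_mult_exp_neg_le: "(u::real) \<ge> 0 \<Longrightarrow> (1 + u) * exp (-u) \<le> 4 / (1 + u)"
proof -
  assume u: "u \<ge> 0"
  have "(1 + u) * (1 + u) \<le> 4 * (1 + u + u^2/2)"
    using u by (simp add: power2_eq_square algebra_simps)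
  also have "\<dots> \<le> 4 * exp u"
    using exp_lower_Taylor_quadratic[OF u] by simp
  finally show ?thesis using u by (simp add: exp_minus field_simps)
qed

lemma abs_exp_minus_one_le: "\<bar>exp (y::real) - 1\<bar> \<le> \<bar>y\<bar> * exp \<bar>y\<bar>"
proof (cases "y \<ge> 0")
  case True
  have "exp y * (1 - y) \<le> exp y * exp (-y)"
    using exp_ge_add_one_self[of "-y"] by simp
  thus ?thesis using True by (simp add: exp_minus algebra_simps)
next
  case False
  have "1 - exp y \<le> -y"
    using exp_ge_add_one_self[of y] by linarith
  also have "\<dots> \<le> -y * exp (-y)"
    using False by (simp add: mult_le_cancel_left1)
  finally show ?thesis using False by simp
qed

lemma cosh_minus_one_le: "cosh (u::real) - 1 \<le> u^2 * exp \<bar>u\<bar> / 2"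
proof -
  define w where "w = \<bar>u\<bar>/2"
  have "cosh u - 1 = (exp w - exp (-w))^2 / 2"
    unfolding w_def cosh_field_def
    by (cases "u \<ge> 0") (simp_all add: power2_eq_square field_simps flip: exp_add)
  also have "exp w * (1 - exp (-2*w)) \<le> exp w * (2*w)"
    using exp_ge_add_one_self[of "-2*w"] by (intro mult_left_mono) simp_all
  hence "exp w - exp (-w) \<le> 2 * w * exp w"
    by (simp add: algebra_simps flip: exp_add)
  hence "(exp w - exp (-w))^2 \<le> (2 * w * exp w)^2"
    by (intro power_mono) (simp_all add: w_def)
  also have "(2 * w * exp w)^2 = u^2 * exp \<bar>u\<bar>"
    by (simp add: w_def power_mult_distrib flip: exp_double)
  finally show ?thesis by (simp add: divide_right_mono)
qed

lemma norm_exp_i_minus_one_le: "norm (exp (\<i> * of_real u) - 1) \<le> \<bar>u\<bar>"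
proof -
  have "norm (exp (\<i> * of_real u) - 1) = sqrt ((cos u - 1)^2 + (sin u)^2)"
    by (simp add: cmod_def flip: cis_conv_exp)
  also have "(cos u - 1)^2 + (sin u)^2 = 2 - 2 * cos u"
    using sin_cos_squared_add[of u] by (simp add: power2_eq_square algebra_simps)
  also have "sqrt (2 - 2 * cos u) \<le> sqrt (u^2)"
    using cos_ge_quadratic[of u] by (intro real_sqrt_le_mono) simp
  finally show ?thesis by simp
qed

section \<open>Fourier representation of the heat kernel\<close>

lemma exp_i_int_has_integral:
  fixes m :: int
  shows "((\<lambda>th. exp (\<i> * of_real (of_int m * th))) has_integral
           (if m = 0 then of_real (2*pi) else 0)) {-pi..pi}"
proof (cases "m = 0")
  case True
  then show ?thesis
    using has_integral_const_real[of "1::complex" "-pi" pi] by (simp add: scaleR_conv_of_real)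
next
  case False
  define F where "F th = exp (\<i> * of_real (of_int m * th)) / (\<i> * of_int m)" for th
  have "((\<lambda>th. exp (\<i> * of_real (of_int m * th))) has_integral (F pi - F (-pi))) {-pi..pi}"
  proof (rule fundamental_theorem_of_calculus)
    fix x :: real
    define G where "G z = exp (\<i> * of_int m * z) / (\<i> * of_int m)" for z :: complex
    have "(G has_field_derivative exp (\<i> * of_int m * of_real x)) (at (of_real x))"
      unfolding G_def using False by (auto intro!: derivative_eq_intros)
    hence "((G \<circ> of_real) has_vector_derivative exp (\<i> * of_int m * of_real x)) (at x within {-pi..pi})"
      by (rule has_complex_derivative_imp_has_vector_derivative[OF has_field_derivative_at_within])
    moreover have "G \<circ> of_real = F"
      unfolding G_def F_def by (rule ext) (simp add: mult.assoc)
    ultimately show "(F has_vector_derivative exp (\<i> * of_real (of_int m * x))) (at x within {-pi..pi})"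
      by (simp add: mult.assoc)
  qed simp
  moreover have "F pi = F (-pi)"
  proof -
    have "sin (of_int m * pi) = 0"
      using sin_npi_int[of m] by (simp only: mult.commute)
    hence "cis (of_int m * pi) = cis (of_int m * (-pi))"
      by (simp add: complex_eq_iff)
    thus ?thesis unfolding F_def by (simp add: cis_conv_exp)
  qed
  ultimately show ?thesis using False by simp
qed

lemma cosh_Complex_power_expansion:
  fixes k :: nat and x :: int
  shows "cosh (Complex l th) ^ k * exp (- (\<i> * of_real (of_int x * th))) =
    (\<Sum>j\<le>k. of_real (real (k choose j) / 2^k * exp (l * of_int (int (2*j) - int k)))
           * exp (\<i> * of_real (of_int (int (2*j) - int k - x) * th)))" (is "_ = ?rhs")
proof -
  have summand: "exp (Complex l th) ^ j * exp (- Complex l th) ^ (k - j) * exp (- (\<i> * of_real (of_int x * th)))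
       = of_real (exp (l * of_int (int (2*j) - int k))) * exp (\<i> * of_real (of_int (int (2*j) - int k - x) * th))"
    if "j \<le> k" for j
  proof -
    have "of_nat j * Complex l th + of_nat (k - j) * (- Complex l th) + (- (\<i> * of_real (of_int x * th)))
        = of_real (l * of_int (int (2*j) - int k)) + \<i> * of_real (of_int (int (2*j) - int k - x) * th)"
      using that by (simp add: complex_eq_iff of_nat_diff algebra_simps)
    moreover have "of_real (exp (l * of_int (int (2*j) - int k))) = exp (of_real (l * of_int (int (2*j) - int k)) :: complex)"
      by (rule exp_of_real[symmetric])
    ultimately show ?thesis
      by (simp only: exp_of_nat_mult[symmetric] exp_add[symmetric])
  qed
  have "cosh (Complex l th) ^ k = (exp (Complex l th) + exp (- Complex l th)) ^ k / 2^k"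
    by (simp add: cosh_field_def power_divide)
  also have "(exp (Complex l th) + exp (- Complex l th)) ^ k =
      (\<Sum>j\<le>k. of_nat (k choose j) * exp (Complex l th) ^ j * exp (- Complex l th) ^ (k - j))"
    by (rule binomial_ring)
  finally have "cosh (Complex l th) ^ k * exp (- (\<i> * of_real (of_int x * th))) =
      (\<Sum>j\<le>k. of_nat (k choose j) / 2^k * (exp (Complex l th) ^ j * exp (- Complex l th) ^ (k - j)
          * exp (- (\<i> * of_real (of_int x * th)))))"
    by (simp add: sum_distrib_left sum_distrib_right sum_divide_distrib mult_ac)
  also have "\<dots> = ?rhs"
    by (intro sum.cong refl, subst summand) simp_all
  finally show ?thesis .
qed

lemma sum_binomial_eq_srw_prob:
  fixes k :: nat and x :: int
  shows "(\<Sum>j\<le>k. if int (2*j) - int k - x = 0 then real (k choose j) else 0) = 2^k * srw_prob k x"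
proof -
  define C where "C = (even (int k + x) \<and> \<bar>x\<bar> \<le> int k)"
  define j0 where "j0 = nat ((int k + x) div 2)"
  have hit: "int (2*j) - int k - x = 0 \<longleftrightarrow> C \<and> j = j0" if "j \<le> k" for j
  proof
    assume "int (2*j) - int k - x = 0"
    then show "C \<and> j = j0"
      using that unfolding C_def j0_def by auto
  next
    assume "C \<and> j = j0"
    then have ev: "even (int k + x)" and le: "\<bar>x\<bar> \<le> int k" and j: "j = j0"
      unfolding C_def by auto
    from ev obtain q where "int k + x = 2 * q" by (rule evenE)
    with le j show "int (2*j) - int k - x = 0" unfolding j0_def by simp
  qed
  have "(\<Sum>j\<le>k. if int (2*j) - int k - x = 0 then real (k choose j) else 0)
      = (\<Sum>j\<le>k. if C \<and> j = j0 then real (k choose j) else 0)"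
    by (intro sum.cong refl) (simp only: atMost_iff hit)
  also have "\<dots> = (if C then real (k choose j0) else 0)"
  proof (cases C)
    case True
    then have "j0 \<le> k" unfolding C_def j0_def by (auto elim!: evenE)
    then show ?thesis using True by (simp add: sum.delta')
  qed simp
  also have "\<dots> = 2^k * srw_prob k x"
  proof (cases C)
    case True
    then have ev: "even (int k + x)" and le: "\<bar>x\<bar> \<le> int k"
      unfolding C_def by auto
    from ev obtain q where q: "int k + x = 2 * q" by (rule evenE)
    have "k choose j0 = k choose nat ((int k + \<bar>x\<bar>) div 2)"
    proof (cases "x \<ge> 0")
      case False
      have "nat ((int k + \<bar>x\<bar>) div 2) = k - j0" "j0 \<le> k"
        using False q le unfolding j0_def by (auto simp: nat_diff_distrib)
      then show ?thesis by (simp add: binomial_symmetric[symmetric])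
    qed (simp add: j0_def)
    then show ?thesis using True unfolding srw_prob_def C_def by simp
  qed (auto simp: srw_prob_def C_def)
  finally show ?thesis .
qed

lemma cosh_Complex_power_Fourier:
  fixes k :: nat and x :: int
  shows "((\<lambda>th. cosh (Complex l th) ^ k * exp (- (\<i> * of_real (of_int x * th)))) has_integral
          of_real (2*pi * exp (l * of_int x) * srw_prob k x)) {-pi..pi}"
proof -
  define c where "c j = real (k choose j) / 2^k * exp (l * of_int (int (2*j) - int k))" for j
  define d where "d j = int (2*j) - int k - x" for j
  have "((\<lambda>th. \<Sum>j\<le>k. of_real (c j) * exp (\<i> * of_real (of_int (d j) * th))) has_integral
      (\<Sum>j\<le>k. of_real (c j) * (if d j = 0 then of_real (2*pi) else 0))) {-pi..pi}"
    by (intro has_integral_sum finite_atMost has_integral_mult_right exp_i_int_has_integral)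
  moreover have "(\<Sum>j\<le>k. of_real (c j) * (if d j = 0 then of_real (2*pi) else 0) :: complex)
      = of_real (2*pi * exp (l * of_int x) / 2^k * (\<Sum>j\<le>k. if d j = 0 then real (k choose j) else 0))"
    unfolding of_real_sum sum_distrib_left
    by (intro sum.cong refl) (auto simp: c_def d_def)
  also have "\<dots> = of_real (2*pi * exp (l * of_int x) * srw_prob k x)"
    unfolding d_def sum_binomial_eq_srw_prob by simp
  ultimately show ?thesis
    unfolding cosh_Complex_power_expansion c_def d_def by simp
qed

lemma srw_prob_nonneg: "0 \<le> srw_prob k x"
  unfolding srw_prob_def by simp

lemma srw_prob_le_1: "srw_prob k x \<le> 1"
proof -
  have "real (k choose j) \<le> 2^k" for j
    using binomial_le_pow2[of k j] by (metis of_nat_le_iff of_nat_numeral of_nat_power)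
  thus ?thesis unfolding srw_prob_def by simp
qed

lemma exp_sums_real: "(\<lambda>k. (t::real)^k / fact k) sums exp t"
  using exp_converges[of t] by (simp add: divide_inverse mult.commute)

lemma heat_kernel_sums:
  assumes "t \<ge> 0"
  shows "(\<lambda>k. exp (-t) * t^k / fact k * srw_prob k x) sums heat_kernel t x"
proof -
  have "summable (\<lambda>k. exp (-t) * (t^k / fact k))"
    using sums_summable[OF sums_mult[OF exp_sums_real[of t]]] .
  moreover have "norm (exp (-t) * t^k / fact k * srw_prob k x) \<le> exp (-t) * (t^k / fact k)" for k
    using assms srw_prob_nonneg[of k x] srw_prob_le_1[of k x]
    by (auto simp: abs_mult intro!: divide_right_mono mult_right_le_one_le)
  ultimately have "summable (\<lambda>k. exp (-t) * t^k / fact k * srw_prob k x)"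
    by (rule summable_comparison_test')
  then show ?thesis unfolding heat_kernel_def by (rule summable_sums)
qed

lemma norm_cosh_Complex_le: "norm (cosh (Complex l th)) \<le> cosh l"
proof -
  have "norm (cosh (Complex l th)) \<le> (norm (exp (Complex l th)) + norm (exp (- Complex l th))) / 2"
    unfolding cosh_field_def norm_divide by (simp add: divide_right_mono norm_triangle_ineq del: norm_exp_eq_Re)
  also have "\<dots> = cosh l"
    by (simp add: norm_exp_eq_Re cosh_field_def)
  finally show ?thesis .
qed

lemma Re_cosh_Complex: "Re (cosh (Complex l th)) = cosh l * cos th"
  by (simp add: cosh_field_def Re_exp algebra_simps add_divide_distrib)

lemma heat_kernel_Fourier:
  fixes x :: int assumes t: "t \<ge> 0"
  shows "((\<lambda>th. exp (of_real t * (cosh (Complex l th) - 1)) * exp (- (\<i> * of_real (of_int x * th))))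
           has_integral of_real (2*pi * exp (l * of_int x) * heat_kernel t x)) {-pi..pi}"
proof -
  define a where "a k = exp (-t) * t^k / fact k" for k
  define E where "E th = exp (- (\<i> * of_real (of_int x * th)))" for th
  define f where "f N th = (\<Sum>k<N. of_real (a k) * (cosh (Complex l th) ^ k * E th))" for N th
  define y where "y N = (\<Sum>k<N. of_real (a k * (2*pi * exp (l * of_int x) * srw_prob k x)) :: complex)" for N
  have a_nonneg: "a k \<ge> 0" for k
    unfolding a_def using t by simp
  have a_sums: "(\<lambda>k. a k * cosh l ^ k) sums (exp (-t) * exp (t * cosh l))"
    using sums_mult[OF exp_sums_real[of "t * cosh l"], of "exp (-t)"]
    by (simp add: a_def power_mult_distrib mult_ac)
  show ?thesis
    unfolding E_def[symmetric]
  proof (rule has_integral_dominated_convergence[where f = f and y = y and h = "\<lambda>_. exp (-t) * exp (t * cosh l)"])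
    show "(f N has_integral y N) {-pi..pi}" for N
      unfolding f_def y_def of_real_mult[of "a _"] E_def
      by (intro has_integral_sum finite_lessThan has_integral_mult_right cosh_Complex_power_Fourier)
    show "(\<lambda>_. exp (-t) * exp (t * cosh l)) integrable_on {-pi..pi}"
      by (rule integrable_const_ivl)
    show "\<forall>th\<in>{-pi..pi}. norm (f N th) \<le> exp (-t) * exp (t * cosh l)" for N
    proof
      fix th :: real
      have "norm (f N th) \<le> (\<Sum>k<N. a k * cosh l ^ k)"
        unfolding f_def using a_nonneg norm_cosh_Complex_le[of l th]
        by (intro order_trans[OF norm_sum] sum_mono)
          (auto simp: norm_mult norm_power E_def norm_exp_eq_Re intro!: mult_left_mono power_mono)
      also have "\<dots> \<le> (\<Sum>k. a k * cosh l ^ k)"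
        using a_nonneg cosh_real_ge_1[of l]
        by (intro sum_le_suminf[OF sums_summable[OF a_sums]]) auto
      also have "\<dots> = exp (-t) * exp (t * cosh l)"
        using a_sums by (rule sums_unique[symmetric])
      finally show "norm (f N th) \<le> exp (-t) * exp (t * cosh l)" .
    qed
    show "\<forall>th\<in>{-pi..pi}. (\<lambda>N. f N th) \<longlonglongrightarrow> exp (of_real t * (cosh (Complex l th) - 1)) * E th"
    proof
      fix th :: real
      have "(\<lambda>k. (of_real (exp (-t)) * E th) * ((of_real t * cosh (Complex l th))^k /\<^sub>R fact k))
            sums ((of_real (exp (-t)) * E th) * exp (of_real t * cosh (Complex l th)))"
        by (rule sums_mult[OF exp_converges])
      then show "(\<lambda>N. f N th) \<longlonglongrightarrow> exp (of_real t * (cosh (Complex l th) - 1)) * E th"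
        unfolding f_def sums_def[symmetric]
        by (simp add: a_def power_mult_distrib scaleR_conv_of_real right_diff_distrib exp_diff
            exp_of_real[symmetric] exp_minus field_simps)
    qed
    show "y \<longlonglongrightarrow> of_real (2*pi * exp (l * of_int x) * heat_kernel t x)"
      using sums_mult[OF heat_kernel_sums[OF t, of x], of "2*pi * exp (l * of_int x)"]
      unfolding y_def sums_def[symmetric] sums_of_real_iff
      by (simp add: a_def mult_ac)
  qed
qed

section \<open>Tilted estimates for the heat kernel\<close>

definition diffusive_scale :: "real \<Rightarrow> real" where
  "diffusive_scale t = (if t \<le> 1 then 1 else 1 / sqrt t)"

lemma diffusive_scale_pos: "diffusive_scale t > 0"
  unfolding diffusive_scale_def by auto

lemma diffusive_scale_le_1: "diffusive_scale t \<le> 1"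
  unfolding diffusive_scale_def by auto

lemma mult_diffusive_scale_sq_le_1: "t \<ge> 0 \<Longrightarrow> t * diffusive_scale t ^ 2 \<le> 1"
  unfolding diffusive_scale_def by (auto simp: power_divide)

lemma inverse_one_plus_sq_has_integral:
  fixes a :: real assumes a: "a > 0"
  shows "((\<lambda>th. 1 / (1 + a * th^2)) has_integral (2 * arctan (sqrt a * pi) / sqrt a)) {-pi..pi}"
proof -
  have "((\<lambda>th. 1 / (1 + a * th^2)) has_integral
          (arctan (sqrt a * pi) / sqrt a - arctan (sqrt a * (-pi)) / sqrt a)) {-pi..pi}"
  proof (rule fundamental_theorem_of_calculus)
    fix x :: real
    have "1 + a * x^2 > 0" "a + a * (a * x^2) > 0"
      using a by (simp_all add: add_pos_nonneg)
    then have "((\<lambda>th. arctan (sqrt a * th) / sqrt a) has_real_derivative 1 / (1 + a * x^2)) (at x)"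
      using a by (auto intro!: derivative_eq_intros simp: power_mult_distrib) (simp add: field_simps)
    then show "((\<lambda>th. arctan (sqrt a * th) / sqrt a) has_vector_derivative 1 / (1 + a * x^2))
               (at x within {-pi..pi})"
      using has_real_derivative_iff_has_vector_derivative has_vector_derivative_at_within by blast
  qed simp
  then show ?thesis by (simp add: arctan_minus)
qed

lemma integral_inverse_one_plus_sq_le:
  fixes a :: real assumes "a > 0"
  shows "integral {-pi..pi} (\<lambda>th. 1 / (1 + a * th^2)) \<le> pi / sqrt a"
  using integral_unique[OF inverse_one_plus_sq_has_integral[OF assms]] arctan_ubound[of "sqrt a * pi"] assms
  by (simp add: divide_right_mono)

lemma exp_cos_le_inverse:
  fixes t th :: real assumes t: "t \<ge> 0" and th: "\<bar>th\<bar> \<le> pi"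
  shows "exp (-t * (1 - cos th)) \<le> 1 / (1 + t/16 * th^2)"
proof -
  have "t * (th^2/16) \<le> t * (1 - cos th)"
    using one_minus_cos_ge_sq[OF th] t by (rule mult_left_mono)
  then have "exp (-t * (1 - cos th)) \<le> exp (-(t/16 * th^2))" by simp
  also have "\<dots> \<le> 1 / (1 + t/16 * th^2)"
    using t by (intro exp_neg_le_inverse) simp
  finally show ?thesis .
qed

lemma abs_mult_exp_cos_le_inverse:
  fixes t th :: real assumes t: "t > 0" and th: "\<bar>th\<bar> \<le> pi"
  shows "\<bar>th\<bar> * exp (-t * (1 - cos th)) \<le> 2 / sqrt (t/16) * (1 / (1 + t/16 * th^2))"
proof -
  define a where "a = t/16"
  define u where "u = a * th^2"
  have a: "a > 0" and u: "u \<ge> 0"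
    using t by (simp_all add: a_def u_def)
  \<comment> \<open>AM-GM\<close>
  have "0 \<le> (sqrt a * \<bar>th\<bar> - 1)^2" by simp
  then have "2 * sqrt a * \<bar>th\<bar> \<le> 1 + u"
    using a unfolding u_def by (simp add: power2_eq_square algebra_simps)
  then have "\<bar>th\<bar> \<le> (1 + u) / (2 * sqrt a)"
    using a by (simp add: field_simps)
  moreover have "exp (-t * (1 - cos th)) \<le> exp (-u)"
    using mult_left_mono[OF one_minus_cos_ge_sq[OF th], of t] t by (simp add: u_def a_def)
  ultimately have "\<bar>th\<bar> * exp (-t * (1 - cos th)) \<le> (1 + u) * exp (-u) / (2 * sqrt a)"
    using mult_mono[of "\<bar>th\<bar>" "(1 + u) / (2 * sqrt a)"] by simp
  also have "\<dots> \<le> 4 / (1 + u) / (2 * sqrt a)"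
    using one_plus_mult_exp_neg_le[OF u] a by (intro divide_right_mono) simp_all
  also have "\<dots> = 2 / sqrt a * (1 / (1 + u))"
    by simp
  finally show ?thesis unfolding u_def a_def .
qed

lemma continuous_on_inverse_one_plus_sq: "a \<ge> 0 \<Longrightarrow> continuous_on S (\<lambda>th::real. 1 / (1 + a * th^2))"
  by (intro continuous_intros) (metis add_pos_nonneg zero_less_one zero_le_power2 mult_nonneg_nonneg less_irrefl)

lemma integral_exp_cos_le:
  fixes t :: real assumes t: "t \<ge> 0"
  shows "integral {-pi..pi} (\<lambda>th. exp (-t * (1 - cos th))) \<le> 4 * pi * diffusive_scale t"
proof (cases "t \<le> 1")
  case True
  have "integral {-pi..pi} (\<lambda>th. exp (-t * (1 - cos th))) \<le> integral {-pi..pi} (\<lambda>th. 1::real)"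
    using t by (intro integral_le integrable_continuous_interval continuous_intros) auto
  with True show ?thesis
    by (simp add: diffusive_scale_def) (use pi_gt_zero in linarith)
next
  case False
  have "integral {-pi..pi} (\<lambda>th. exp (-t * (1 - cos th)))
        \<le> integral {-pi..pi} (\<lambda>th. 1 / (1 + t/16 * th^2))"
    using False
    by (intro integral_le integrable_continuous_interval continuous_intros
        continuous_on_inverse_one_plus_sq exp_cos_le_inverse) auto
  also have "\<dots> \<le> pi / sqrt (t/16)"
    using False by (intro integral_inverse_one_plus_sq_le) simp
  also have "\<dots> = 4 * pi * diffusive_scale t"
    using False by (simp add: diffusive_scale_def real_sqrt_divide)
  finally show ?thesis .
qed

lemma integral_abs_mult_exp_cos_le:
  fixes t :: real assumes t: "t \<ge> 0"
  shows "integral {-pi..pi} (\<lambda>th. \<bar>th\<bar> * exp (-t * (1 - cos th))) \<le> 32 * pi * diffusive_scale t ^ 2"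
proof (cases "t \<le> 1")
  case True
  have "integral {-pi..pi} (\<lambda>th. \<bar>th\<bar> * exp (-t * (1 - cos th))) \<le> integral {-pi..pi} (\<lambda>th. pi * 1)"
    using t
    by (intro integral_le integrable_continuous_interval continuous_intros mult_mono) auto
  also have "\<dots> \<le> 32 * pi * diffusive_scale t ^ 2"
    using True pi_less_4 by (simp add: diffusive_scale_def)
  finally show ?thesis .
next
  case False
  have "integral {-pi..pi} (\<lambda>th. \<bar>th\<bar> * exp (-t * (1 - cos th)))
      \<le> integral {-pi..pi} (\<lambda>th. 2 / sqrt (t/16) * (1 / (1 + t/16 * th^2)))"
    using False
    by (intro integral_le integrable_continuous_interval continuous_intros
        continuous_on_inverse_one_plus_sq abs_mult_exp_cos_le_inverse) auto
  also have "\<dots> = 2 / sqrt (t/16) * integral {-pi..pi} (\<lambda>th. 1 / (1 + t/16 * th^2))"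
    by (rule integral_mult_right)
  also have "\<dots> \<le> 2 / sqrt (t/16) * (pi / sqrt (t/16))"
    using False by (intro mult_left_mono integral_inverse_one_plus_sq_le) simp_all
  also have "\<dots> = 32 * pi * diffusive_scale t ^ 2"
    using False by (simp add: diffusive_scale_def real_sqrt_divide power_divide)
  finally show ?thesis .
qed

lemma norm_exp_cosh_Complex_le:
  fixes t :: real assumes t: "t \<ge> 0"
  shows "norm (exp (of_real t * (cosh (Complex l th) - 1)))
           \<le> exp (t * (cosh l - 1)) * exp (-t * (1 - cos th))"
proof -
  have "(cosh l - 1) * (cos th - 1) \<le> 0"
    using cosh_real_ge_1[of l] by (intro mult_nonneg_nonpos) simp_all
  then have "t * (cosh l * cos th - 1) \<le> t * ((cosh l - 1) - (1 - cos th))"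
    using t by (intro mult_left_mono) (simp_all add: algebra_simps)
  then show ?thesis
    by (simp add: norm_exp_eq_Re Re_cosh_Complex algebra_simps flip: exp_add)
qed

lemma norm_Fourier_integral_le:
  fixes g :: "real \<Rightarrow> complex"
  assumes t: "t \<ge> 0" and g: "(g has_integral I) {-pi..pi}" and AB: "A \<ge> 0" "B \<ge> 0"
    and bound: "\<And>th. norm (g th) \<le> exp (t * (cosh l - 1)) * ((A + B * \<bar>th\<bar>) * exp (-t * (1 - cos th)))"
  shows "norm I \<le> exp (t * (cosh l - 1)) * (A * 4 * pi * diffusive_scale t + B * 32 * pi * diffusive_scale t ^ 2)"
proof -
  define E where "E = exp (t * (cosh l - 1))"
  define k0 where "k0 th = exp (-t * (1 - cos th))" for th
  define k1 where "k1 th = \<bar>th\<bar> * exp (-t * (1 - cos th))" for th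
  have k0: "(k0 has_integral integral {-pi..pi} k0) {-pi..pi}"
   and k1: "(k1 has_integral integral {-pi..pi} k1) {-pi..pi}"
    unfolding k0_def k1_def by (intro integrable_integral integrable_continuous_interval continuous_intros)+
  have h: "((\<lambda>th. E * (A * k0 th + B * k1 th)) has_integral
            E * (A * integral {-pi..pi} k0 + B * integral {-pi..pi} k1)) {-pi..pi}"
    by (intro has_integral_mult_right has_integral_add k0 k1)
  have "norm (g th) \<le> E * (A * k0 th + B * k1 th)" for th
    using bound[of th] by (simp add: E_def k0_def k1_def algebra_simps)
  then have "norm (integral {-pi..pi} g) \<le> integral {-pi..pi} (\<lambda>th. E * (A * k0 th + B * k1 th))"
    by (intro integral_norm_bound_integral has_integral_integrable[OF g] has_integral_integrable[OF h])
  then have "norm I \<le> E * (A * integral {-pi..pi} k0 + B * integral {-pi..pi} k1)"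
    by (simp only: integral_unique[OF g] integral_unique[OF h])
  also have "\<dots> \<le> E * (A * (4 * pi * diffusive_scale t) + B * (32 * pi * diffusive_scale t ^ 2))"
    unfolding k0_def k1_def using AB integral_exp_cos_le[OF t] integral_abs_mult_exp_cos_le[OF t]
    by (intro mult_left_mono add_mono) (simp_all add: E_def)
  finally show ?thesis by (simp add: E_def mult_ac)
qed

lemma heat_kernel_tilted_le:
  fixes x :: int assumes t: "t \<ge> 0"
  shows "exp (l * of_int x) * \<bar>heat_kernel t x\<bar> \<le> exp (t * (cosh l - 1)) * (2 * diffusive_scale t)"
proof -
  have "norm (of_real (2*pi * exp (l * of_int x) * heat_kernel t x) :: complex)
        \<le> exp (t * (cosh l - 1)) * (1 * 4 * pi * diffusive_scale t + 0 * 32 * pi * diffusive_scale t ^ 2)"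
    using norm_exp_cosh_Complex_le[OF t]
    by (intro norm_Fourier_integral_le[OF t heat_kernel_Fourier[OF t]]) (simp_all add: norm_mult)
  then have "2*pi * (exp (l * of_int x) * \<bar>heat_kernel t x\<bar>)
             \<le> 2*pi * (exp (t * (cosh l - 1)) * (2 * diffusive_scale t))"
    unfolding norm_of_real by (simp add: abs_mult mult_ac)
  then show ?thesis
    using pi_gt_zero by (simp add: mult_ac)
qed

lemma norm_scaled_exp_i_minus_one_le:
  "norm (of_real c * exp (- (\<i> * of_real u)) - 1) \<le> \<bar>c - 1\<bar> + \<bar>u\<bar>"
proof -
  have "norm (of_real c * exp (- (\<i> * of_real u)) - 1)
        \<le> norm (of_real (c - 1) * exp (- (\<i> * of_real u))) + norm (exp (\<i> * of_real (-u)) - 1)"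
    using norm_triangle_ineq[of "of_real (c - 1) * exp (- (\<i> * of_real u))" "exp (- (\<i> * of_real u)) - 1"]
    by (simp add: algebra_simps)
  also have "norm (of_real (c - 1) * exp (- (\<i> * of_real u))) = \<bar>c - 1\<bar>"
    unfolding norm_mult norm_of_real by simp
  also have "norm (exp (\<i> * of_real (-u)) - 1) \<le> \<bar>u\<bar>"
    using norm_exp_i_minus_one_le[of "-u"] by simp
  finally show ?thesis by simp
qed

lemma heat_kernel_increment_tilted_le:
  fixes x n :: int assumes t: "t \<ge> 0"
  shows "exp (l * of_int x) * \<bar>heat_kernel t (x + n) - heat_kernel t x\<bar>
     \<le> exp (t * (cosh l - 1)) *
        (\<bar>exp (-l * of_int n) - 1\<bar> * (2 * diffusive_scale t) + \<bar>of_int n\<bar> * (16 * diffusive_scale t ^ 2))"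
proof -
  define c where "c = exp (-l * of_int n)"
  define F where "F th = exp (of_real t * (cosh (Complex l th) - 1))" for th
  define e where "e y th = exp (- (\<i> * of_real (of_int y * th)))" for y :: int and th :: real
  have int: "((\<lambda>th. of_real c * (F th * e (x + n) th) - F th * e x th) has_integral
         of_real c * of_real (2*pi * exp (l * of_int (x + n)) * heat_kernel t (x + n))
         - of_real (2*pi * exp (l * of_int x) * heat_kernel t x)) {-pi..pi}"
    unfolding F_def e_def by (intro has_integral_diff has_integral_mult_right heat_kernel_Fourier t)
  have integrand: "(\<lambda>th. of_real c * (F th * e (x + n) th) - F th * e x th)
                 = (\<lambda>th. F th * e x th * (of_real c * e n th - 1))"
    by (simp add: e_def algebra_simps flip: exp_add)
  have "c * (2*pi * exp (l * of_int (x + n)) * heat_kernel t (x + n))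
        - 2*pi * exp (l * of_int x) * heat_kernel t x
        = 2*pi * exp (l * of_int x) * (heat_kernel t (x + n) - heat_kernel t x)"
    unfolding c_def by (simp add: algebra_simps flip: exp_add)
  then have integral_value: "of_real c * of_real (2*pi * exp (l * of_int (x + n)) * heat_kernel t (x + n))
         - of_real (2*pi * exp (l * of_int x) * heat_kernel t x)
        = (of_real (2*pi * exp (l * of_int x) * (heat_kernel t (x + n) - heat_kernel t x)) :: complex)"
    by (simp only: of_real_mult[symmetric] of_real_diff[symmetric])
  have I: "((\<lambda>th. F th * e x th * (of_real c * e n th - 1)) has_integral
         of_real (2*pi * exp (l * of_int x) * (heat_kernel t (x + n) - heat_kernel t x))) {-pi..pi}"
    using int unfolding integrand integral_value .
  have factor: "norm (of_real c * e n th - 1) \<le> \<bar>c - 1\<bar> + \<bar>of_int n\<bar> * \<bar>th\<bar>" for th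
    using norm_scaled_exp_i_minus_one_le[of c "of_int n * th"] by (simp add: e_def abs_mult)
  have "norm (F th * e x th * (of_real c * e n th - 1))
        \<le> exp (t * (cosh l - 1)) * ((\<bar>c - 1\<bar> + \<bar>of_int n\<bar> * \<bar>th\<bar>) * exp (-t * (1 - cos th)))" for th
  proof -
    have "norm (F th * e x th * (of_real c * e n th - 1)) = norm (F th) * norm (of_real c * e n th - 1)"
      by (simp add: e_def norm_mult)
    also have "\<dots> \<le> (exp (t * (cosh l - 1)) * exp (-t * (1 - cos th))) * (\<bar>c - 1\<bar> + \<bar>of_int n\<bar> * \<bar>th\<bar>)"
      unfolding F_def by (intro mult_mono norm_exp_cosh_Complex_le t factor) simp_all
    finally show ?thesis by (simp only: mult_ac)
  qed
  then have "norm (of_real (2*pi * exp (l * of_int x) * (heat_kernel t (x + n) - heat_kernel t x)) :: complex)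
        \<le> exp (t * (cosh l - 1)) *
           (\<bar>c - 1\<bar> * 4 * pi * diffusive_scale t + \<bar>of_int n\<bar> * 32 * pi * diffusive_scale t ^ 2)"
    by (intro norm_Fourier_integral_le[OF t I]) simp_all
  then have "2*pi * (exp (l * of_int x) * \<bar>heat_kernel t (x + n) - heat_kernel t x\<bar>)
        \<le> 2*pi * (exp (t * (cosh l - 1)) *
           (\<bar>c - 1\<bar> * (2 * diffusive_scale t) + \<bar>of_int n\<bar> * (16 * diffusive_scale t ^ 2)))"
    unfolding norm_of_real abs_mult by (simp add: algebra_simps)
  then show ?thesis
    using pi_gt_zero by (simp add: c_def)
qed

definition tilt_const :: "real \<Rightarrow> real" where
  "tilt_const L = exp (L^2 * exp L / 2)"

definition increment_const :: "real \<Rightarrow> real" where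
  "increment_const L = 2 * L * exp L + 16"

lemma exp_cosh_tilt_le:
  fixes t l L :: real
  assumes t: "t \<ge> 0" and L: "L \<ge> 0" and l: "\<bar>l\<bar> \<le> L * diffusive_scale t"
  shows "exp (t * (cosh l - 1)) \<le> tilt_const L"
proof -
  define m where "m = diffusive_scale t"
  have m: "0 < m" "m \<le> 1"
    unfolding m_def by (simp_all add: diffusive_scale_pos diffusive_scale_le_1)
  have "\<bar>l\<bar> \<le> L"
    using l mult_left_le[OF m(2) L] unfolding m_def by linarith
  moreover have "l^2 \<le> L^2 * m^2"
    using power_mono[OF l, of 2] by (simp add: m_def power_mult_distrib)
  ultimately have "l^2 * exp \<bar>l\<bar> / 2 \<le> L^2 * m^2 * exp L / 2"
    by (intro divide_right_mono mult_mono) simp_all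
  then have "t * (cosh l - 1) \<le> t * (L^2 * m^2 * exp L / 2)"
    using cosh_minus_one_le[of l] t by (intro mult_left_mono) simp_all
  also have "\<dots> = (t * m^2) * (L^2 * exp L / 2)" by simp
  also have "\<dots> \<le> L^2 * exp L / 2"
    using mult_diffusive_scale_sq_le_1[OF t] t by (intro mult_left_le_one_le) (simp_all add: m_def)
  finally show ?thesis unfolding tilt_const_def by simp
qed

lemma le_mult_exp_neg_if_exp_mult_le:
  fixes u a X :: real
  assumes "exp u * a \<le> X"
  shows "a \<le> X * exp (-u)"
proof -
  have "a = exp (-u) * (exp u * a)"
    by (simp add: exp_minus)
  also have "\<dots> \<le> exp (-u) * X"
    using assms by (rule mult_left_mono) simp
  finally show ?thesis by (simp add: mult.commute)
qed

lemma heat_kernel_exp_decay: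
  fixes s :: int
  assumes t: "t \<ge> 0" and L: "L \<ge> 0" and l: "\<bar>l\<bar> \<le> L * diffusive_scale t"
  shows "\<bar>heat_kernel t s\<bar> \<le> tilt_const L * (2 * diffusive_scale t) * exp (-l * of_int s)"
proof -
  have "exp (l * of_int s) * \<bar>heat_kernel t s\<bar> \<le> exp (t * (cosh l - 1)) * (2 * diffusive_scale t)"
    by (rule heat_kernel_tilted_le[OF t])
  also have "\<dots> \<le> tilt_const L * (2 * diffusive_scale t)"
    using exp_cosh_tilt_le[OF t L l] diffusive_scale_pos[of t] by simp
  finally show ?thesis
    by (simp add: le_mult_exp_neg_if_exp_mult_le)
qed

lemma heat_kernel_increment_exp_decay:
  fixes s n :: int
  assumes t: "t \<ge> 0" and L: "L \<ge> 0" and l: "\<bar>l\<bar> \<le> L * diffusive_scale t"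
    and n: "\<bar>of_int n\<bar> * diffusive_scale t \<le> 1"
  shows "\<bar>heat_kernel t (s + n) - heat_kernel t s\<bar>
           \<le> tilt_const L * (increment_const L * diffusive_scale t ^ 2 * \<bar>of_int n\<bar>) * exp (-l * of_int s)"
proof -
  define m where "m = diffusive_scale t"
  define N where "N = \<bar>real_of_int n\<bar>"
  have m: "0 < m" and N: "0 \<le> N"
    unfolding m_def N_def by (simp_all add: diffusive_scale_pos)
  have ln: "\<bar>-l * of_int n\<bar> \<le> L * m * N"
    using l by (simp add: m_def N_def abs_mult mult_right_mono)
  have LmN: "L * m * N \<le> L"
    using n L by (simp add: m_def N_def mult_left_le mult.commute mult.left_commute)
  have "\<bar>exp (-l * of_int n) - 1\<bar> \<le> \<bar>-l * of_int n\<bar> * exp \<bar>-l * of_int n\<bar>"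
    by (rule abs_exp_minus_one_le)
  also have "\<dots> \<le> (L * m * N) * exp L"
    using ln LmN by (intro mult_mono) simp_all
  finally have "\<bar>exp (-l * of_int n) - 1\<bar> * (2 * m) \<le> (L * m * N * exp L) * (2 * m)"
    using m by (intro mult_right_mono) simp_all
  also have "\<dots> = increment_const L * m^2 * N - N * (16 * m^2)"
    by (simp add: increment_const_def power2_eq_square algebra_simps)
  finally have factor: "\<bar>exp (-l * of_int n) - 1\<bar> * (2 * m) + N * (16 * m^2) \<le> increment_const L * m^2 * N"
    by simp
  have "exp (l * of_int s) * \<bar>heat_kernel t (s + n) - heat_kernel t s\<bar>
        \<le> exp (t * (cosh l - 1)) * (\<bar>exp (-l * of_int n) - 1\<bar> * (2 * m) + N * (16 * m^2))"
    unfolding m_def N_def by (rule heat_kernel_increment_tilted_le[OF t])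
  also have "\<dots> \<le> exp (t * (cosh l - 1)) * (increment_const L * m^2 * N)"
    using factor by (rule mult_left_mono) simp
  also have "\<dots> \<le> tilt_const L * (increment_const L * m^2 * N)"
    using exp_cosh_tilt_le[OF t L l] m N L by (intro mult_right_mono) (simp_all add: increment_const_def)
  finally show ?thesis
    by (simp add: le_mult_exp_neg_if_exp_mult_le m_def N_def)
qed

section \<open>Estimates for the Robin kernel\<close>

definition robin_transform :: "real \<Rightarrow> (int \<Rightarrow> real) \<Rightarrow> int \<Rightarrow> int \<Rightarrow> real" where
  "robin_transform \<mu> f x y = f (x - y) + \<mu> * f (x + y + 1)
     + (1 - \<mu> powi (-2)) * (\<Sum>j. f (x + y + int j + 2) * \<mu> ^ (j + 2))"

lemma robin_kernel_eq_robin_transform: "robin_kernel A \<epsilon> t = robin_transform (muA A \<epsilon>) (heat_kernel t)"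
  by (simp add: fun_eq_iff robin_kernel_def robin_transform_def)

lemma robin_transform_diff:
  assumes "summable (\<lambda>j. f (x + y + int j + 2) * \<mu> ^ (j + 2))"
    and "summable (\<lambda>j. g (x + y + int j + 2) * \<mu> ^ (j + 2))"
  shows "robin_transform \<mu> f x y - robin_transform \<mu> g x y = robin_transform \<mu> (\<lambda>s. f s - g s) x y"
proof -
  have "(\<Sum>j. (f (x + y + int j + 2) - g (x + y + int j + 2)) * \<mu> ^ (j + 2))
        = (\<Sum>j. f (x + y + int j + 2) * \<mu> ^ (j + 2)) - (\<Sum>j. g (x + y + int j + 2) * \<mu> ^ (j + 2))"
    using suminf_diff[OF assms] by (simp add: left_diff_distrib)
  then show ?thesis
    unfolding robin_transform_def by (simp add: right_diff_distrib)
qed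

lemma muA_bounds:
  assumes Ae: "\<bar>A\<bar> * \<epsilon> \<le> 1/2" and e: "\<epsilon> \<ge> 0"
  shows "1/2 \<le> muA A \<epsilon>" "muA A \<epsilon> \<le> 3/2" "muA A \<epsilon> \<le> exp (\<bar>A\<bar> * \<epsilon>)"
    and "\<bar>1 - muA A \<epsilon> powi (-2)\<bar> \<le> 10 * (\<bar>A\<bar> * \<epsilon>)"
proof -
  have Ae': "\<bar>A * \<epsilon>\<bar> \<le> 1/2"
    using Ae e by (simp add: abs_mult)
  then show mu: "1/2 \<le> muA A \<epsilon>" and "muA A \<epsilon> \<le> 3/2"
    unfolding muA_def by (simp_all add: abs_le_iff)
  have "- (A * \<epsilon>) \<le> \<bar>A\<bar> * \<epsilon>"
    using abs_ge_minus_self[of "A * \<epsilon>"] e by (simp add: abs_mult)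
  then show "muA A \<epsilon> \<le> exp (\<bar>A\<bar> * \<epsilon>)"
    using exp_ge_add_one_self[of "\<bar>A\<bar> * \<epsilon>"] unfolding muA_def by linarith
  have "1 - muA A \<epsilon> powi (-2) = (muA A \<epsilon>^2 - 1) * (1 / muA A \<epsilon>^2)"
    using mu by (simp add: power_int_minus field_simps)
  also have "muA A \<epsilon>^2 - 1 = (- (A * \<epsilon>)) * (2 - A * \<epsilon>)"
    by (simp add: muA_def power2_eq_square algebra_simps)
  finally have eq: "1 - muA A \<epsilon> powi (-2) = (- (A * \<epsilon>)) * (2 - A * \<epsilon>) * (1 / muA A \<epsilon>^2)" .
  have "1/4 \<le> muA A \<epsilon>^2"
    using power_mono[OF mu, of 2] by (simp add: power_divide)
  then have "1 / muA A \<epsilon>^2 \<le> 4"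
    by (simp add: divide_le_eq mult.commute)
  moreover have "\<bar>2 - A * \<epsilon>\<bar> \<le> 5/2"
    using Ae' by (simp add: abs_le_iff)
  ultimately have "\<bar>1 - muA A \<epsilon> powi (-2)\<bar> \<le> \<bar>A * \<epsilon>\<bar> * (5/2) * 4"
    unfolding eq abs_mult by (intro mult_mono) (simp_all add: abs_mult)
  then show "\<bar>1 - muA A \<epsilon> powi (-2)\<bar> \<le> 10 * (\<bar>A\<bar> * \<epsilon>)"
    using e by (simp add: abs_mult mult.commute)
qed

lemma geometric_dominated:
  fixes f :: "nat \<Rightarrow> real"
  assumes f: "\<And>j. \<bar>f j\<bar> \<le> B * q^j" and q: "0 \<le> q" "q < 1"
  shows "summable f" and "\<bar>suminf f\<bar> \<le> B / (1 - q)"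
proof -
  have g: "(\<lambda>j. B * q^j) sums (B / (1 - q))"
    using sums_mult[OF geometric_sums[of q], of B] q by simp
  have abs: "summable (\<lambda>j. \<bar>f j\<bar>)"
    using f by (intro summable_comparison_test'[OF sums_summable[OF g]]) simp
  then show "summable f"
    by (rule summable_rabs_cancel)
  have "\<bar>suminf f\<bar> \<le> (\<Sum>j. \<bar>f j\<bar>)"
    by (rule summable_rabs[OF abs])
  also have "\<dots> \<le> (\<Sum>j. B * q^j)"
    using f abs sums_summable[OF g] by (rule suminf_le)
  finally show "\<bar>suminf f\<bar> \<le> B / (1 - q)"
    using sums_unique[OF g] by simp
qed

lemma tilted_geometric_term_le:
  fixes g :: "nat \<Rightarrow> real"
  assumes \<mu>: "0 \<le> \<mu>" "\<mu> \<le> exp u" and u: "u \<ge> 0" and \<beta>: "\<beta> \<ge> 0" and S: "S \<ge> 0"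
    and g: "\<And>j. \<bar>g j\<bar> \<le> D * exp (-(\<beta> + 2 * u) * (S + real j))"
  shows "\<bar>g j * \<mu> ^ (j + 2)\<bar> \<le> (D * exp (-\<beta> * S) * \<mu>^2) * exp (-u) ^ j"
proof -
  have D: "D \<ge> 0"
    using order_trans[OF abs_ge_zero g[of 0]] by (simp add: zero_le_mult_iff)
  have ratio: "exp (-(\<beta> + 2 * u)) * \<mu> \<le> exp (-u)"
  proof -
    have "exp (-(\<beta> + 2 * u)) * \<mu> \<le> exp (-(\<beta> + 2 * u)) * exp u"
      using \<mu>(2) by (rule mult_left_mono) simp
    also have "\<dots> = exp (-\<beta> - u)"
      by (simp flip: exp_add)
    finally show ?thesis
      using \<beta> by (smt (verit) exp_mono)
  qed
  have "\<bar>g j * \<mu> ^ (j + 2)\<bar> \<le> D * exp (-(\<beta> + 2 * u) * (S + real j)) * \<mu> ^ (j + 2)"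
    using g[of j] \<mu>(1) by (simp add: abs_mult mult_right_mono)
  also have "\<dots> = D * exp (-(\<beta> + 2 * u) * S) * \<mu>^2 * (exp (-(\<beta> + 2 * u)) * \<mu>) ^ j"
    by (simp add: power_add power_mult_distrib power2_eq_square algebra_simps exp_of_nat_mult[symmetric]
        flip: exp_add)
  also have "\<dots> \<le> D * exp (-\<beta> * S) * \<mu>^2 * exp (-u) ^ j"
    using D ratio \<mu>(1) u S
    by (intro mult_mono power_mono mult_right_mono mult_left_mono) (simp_all add: algebra_simps)
  finally show ?thesis .
qed

text \<open>The factor \<open>1 - \<mu>\<^sup>-\<^sup>2 = O(\<epsilon>)\<close> compensates the length \<open>O(1/\<epsilon>)\<close> of the
  geometric tail, provided the summands decay at an extra rate \<open>2 \<bar>A\<bar> \<epsilon>\<close> beating \<open>\<mu> \<le> e\<^sup>\<bar>\<^sup>A\<^sup>\<bar>\<^sup>\<epsilon>\<close>.\<close>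
lemma robin_tail_le:
  fixes g :: "nat \<Rightarrow> real"
  assumes Ae: "\<bar>A\<bar> * \<epsilon> \<le> 1/2" and e: "\<epsilon> > 0" and A: "A \<noteq> 0" and \<beta>: "\<beta> \<ge> 0" and S: "S \<ge> 0"
    and g: "\<And>j. \<bar>g j\<bar> \<le> D * exp (-(\<beta> + 2 * \<bar>A\<bar> * \<epsilon>) * (S + real j))"
  shows "summable (\<lambda>j. g j * muA A \<epsilon> ^ (j + 2))"
    and "\<bar>(1 - muA A \<epsilon> powi (-2)) * (\<Sum>j. g j * muA A \<epsilon> ^ (j + 2))\<bar> \<le> 34 * D * exp (-\<beta> * S)"
proof -
  define \<mu> where "\<mu> = muA A \<epsilon>"
  define u where "u = \<bar>A\<bar> * \<epsilon>"
  define q where "q = exp (-u)"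
  define B where "B = D * exp (-\<beta> * S) * \<mu>^2"
  have u: "0 < u" "u \<le> 1/2"
    using A e Ae by (simp_all add: u_def)
  have q: "0 \<le> q" "q < 1"
    using u by (simp_all add: q_def)
  have \<mu>: "1/2 \<le> \<mu>" "\<mu> \<le> 3/2" "\<mu> \<le> exp u" "\<bar>1 - \<mu> powi (-2)\<bar> \<le> 10 * u"
    using muA_bounds[OF Ae] e by (simp_all add: \<mu>_def u_def)
  have g: "\<bar>g j\<bar> \<le> D * exp (-(\<beta> + 2 * u) * (S + real j))" for j
    using g[of j] by (simp add: u_def mult.assoc)
  then have D: "D \<ge> 0"
    using order_trans[OF abs_ge_zero g[of 0]] by (simp add: zero_le_mult_iff)
  have bound: "\<bar>g j * \<mu> ^ (j + 2)\<bar> \<le> B * q^j" for j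
    unfolding B_def q_def using \<mu> u \<beta> S g by (intro tilted_geometric_term_le) simp_all
  show "summable (\<lambda>j. g j * muA A \<epsilon> ^ (j + 2))"
    using geometric_dominated(1)[OF bound q] by (simp add: \<mu>_def)
  have "\<bar>(1 - \<mu> powi (-2)) * (\<Sum>j. g j * \<mu> ^ (j + 2))\<bar> \<le> 10 * u * (B / (1 - q))"
    unfolding abs_mult using \<mu>(4) geometric_dominated(2)[OF bound q] by (intro mult_mono) simp_all
  also have "\<dots> = 10 * (u / (1 - q)) * B"
    by simp
  also have "\<dots> \<le> 10 * (3/2) * (D * exp (-\<beta> * S) * (3/2)^2)"
  proof (rule mult_mono)
    have "u / (1 - q) \<le> 1 + u"
      using exp_neg_le_inverse[of u] u q by (simp add: q_def field_simps)
    then show "10 * (u / (1 - q)) \<le> 10 * (3/2)"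
      using u by simp
    show "B \<le> D * exp (-\<beta> * S) * (3/2)^2"
      unfolding B_def using D \<mu> by (intro mult_left_mono power_mono) simp_all
  qed (use D u q in \<open>simp_all add: B_def\<close>)
  also have "\<dots> \<le> 34 * D * exp (-\<beta> * S)"
    using D by (simp add: power2_eq_square)
  finally show "\<bar>(1 - muA A \<epsilon> powi (-2)) * (\<Sum>j. g j * muA A \<epsilon> ^ (j + 2))\<bar> \<le> 34 * D * exp (-\<beta> * S)"
    unfolding \<mu>_def .
qed

lemma robin_transform_le:
  fixes f :: "int \<Rightarrow> real"
  assumes Ae: "\<bar>A\<bar> * \<epsilon> \<le> 1/2" and e: "\<epsilon> > 0" and \<beta>: "\<beta> \<ge> 0" and x: "x \<ge> 0" and y: "y \<ge> 0"
    and decay: "\<And>l s. \<bar>l\<bar> \<le> \<beta> + 2 * \<bar>A\<bar> * \<epsilon> \<Longrightarrow> \<bar>f s\<bar> \<le> D * exp (-l * of_int s)"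
  shows "\<bar>robin_transform (muA A \<epsilon>) f x y\<bar> \<le> 37 * D * exp (-\<beta> * of_int \<bar>x - y\<bar>)"
proof -
  define \<mu> where "\<mu> = muA A \<epsilon>"
  define \<kappa> where "\<kappa> = 1 - \<mu> powi (-2)"
  define W where "W = exp (-\<beta> * of_int \<bar>x - y\<bar>)"
  have rate: "\<beta> \<le> \<beta> + 2 * \<bar>A\<bar> * \<epsilon>"
    using e by simp
  have D: "D \<ge> 0"
    using order_trans[OF abs_ge_zero decay[of 0 0]] \<beta> e by simp
  have \<mu>: "1/2 \<le> \<mu>" "\<mu> \<le> 3/2"
    using muA_bounds[OF Ae] e by (simp_all add: \<mu>_def)
  have weight: "D * exp (-\<beta> * of_int s) \<le> D * W" if "\<bar>x - y\<bar> \<le> s" for s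
    unfolding W_def using D \<beta> that by (intro mult_left_mono) (simp_all add: mult_left_mono)
  have T1: "\<bar>f (x - y)\<bar> \<le> D * W"
  proof -
    define l where "l = (if y \<le> x then \<beta> else -\<beta>)"
    have "\<bar>f (x - y)\<bar> \<le> D * exp (-l * of_int (x - y))"
      using \<beta> rate by (intro decay) (simp add: l_def)
    also have "exp (-l * of_int (x - y)) = W"
      unfolding l_def W_def by (auto simp: algebra_simps)
    finally show ?thesis .
  qed
  have T2: "\<bar>\<mu> * f (x + y + 1)\<bar> \<le> 3/2 * (D * W)"
  proof -
    have "\<bar>f (x + y + 1)\<bar> \<le> D * exp (-\<beta> * of_int (x + y + 1))"
      using \<beta> rate by (intro decay) simp
    also have "\<dots> \<le> D * W"
      using x y by (intro weight) simp
    finally have "\<bar>f (x + y + 1)\<bar> \<le> D * W" .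
    then show ?thesis
      unfolding abs_mult using \<mu> by (intro mult_mono) simp_all
  qed
  have T3: "\<bar>\<kappa> * (\<Sum>j. f (x + y + int j + 2) * \<mu> ^ (j + 2))\<bar> \<le> 34 * (D * W)"
  proof (cases "A = 0")
    case True
    then show ?thesis
      using D W_def by (simp add: \<kappa>_def \<mu>_def muA_def)
  next
    case False
    have "\<bar>f (x + y + int j + 2)\<bar> \<le> D * exp (-(\<beta> + 2 * \<bar>A\<bar> * \<epsilon>) * (of_int (x + y + 2) + real j))" for j
      using decay[of "\<beta> + 2 * \<bar>A\<bar> * \<epsilon>" "x + y + int j + 2"] \<beta> e by (simp add: algebra_simps)
    then have "\<bar>\<kappa> * (\<Sum>j. f (x + y + int j + 2) * \<mu> ^ (j + 2))\<bar> \<le> 34 * D * exp (-\<beta> * of_int (x + y + 2))"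
      unfolding \<kappa>_def \<mu>_def using x y by (intro robin_tail_le(2)[OF Ae e False \<beta>]) simp_all
    also have "\<dots> \<le> 34 * (D * W)"
      using weight[of "x + y + 2"] x y by simp
    finally show ?thesis .
  qed
  have "\<bar>robin_transform \<mu> f x y\<bar>
        \<le> \<bar>f (x - y)\<bar> + \<bar>\<mu> * f (x + y + 1)\<bar> + \<bar>\<kappa> * (\<Sum>j. f (x + y + int j + 2) * \<mu> ^ (j + 2))\<bar>"
    unfolding robin_transform_def \<kappa>_def by linarith
  also have "\<dots> \<le> 37 * D * W"
    using T1 T2 T3 mult_nonneg_nonneg[OF D, of W] by (simp add: W_def)
  finally show ?thesis
    unfolding \<mu>_def W_def .
qed

lemma robin_kernel_shift_diff:
  fixes x y n :: int
  assumes Ae: "\<bar>A\<bar> * \<epsilon> \<le> 1/2" and e: "\<epsilon> > 0" and t: "t \<ge> 0"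
    and x: "x \<ge> 0" and y: "y \<ge> 0" and xn: "x + n \<ge> 0"
  shows "robin_kernel A \<epsilon> t (x + n) y - robin_kernel A \<epsilon> t x y
           = robin_transform (muA A \<epsilon>) (\<lambda>s. heat_kernel t (s + n) - heat_kernel t s) x y"
proof (cases "A = 0")
  case True
  then show ?thesis
    by (simp add: robin_kernel_def robin_transform_def muA_def algebra_simps)
next
  case False
  define l where "l = 2 * \<bar>A\<bar> * \<epsilon>"
  define D where "D = exp (t * (cosh l - 1)) * 2"
  have decay: "\<bar>heat_kernel t s\<bar> \<le> D * exp (-l * of_int s)" for s
  proof -
    have "exp (l * of_int s) * \<bar>heat_kernel t s\<bar> \<le> exp (t * (cosh l - 1)) * (2 * diffusive_scale t)"
      by (rule heat_kernel_tilted_le[OF t])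
    also have "\<dots> \<le> D"
      unfolding D_def using diffusive_scale_le_1[of t] by simp
    finally show ?thesis
      by (simp add: le_mult_exp_neg_if_exp_mult_le)
  qed
  have tail: "\<bar>heat_kernel t (z + int j + 2)\<bar> \<le> D * exp (-(0 + 2 * \<bar>A\<bar> * \<epsilon>) * (of_int (z + 2) + real j))"
    for z j
    using decay[of "z + int j + 2"] by (simp add: l_def algebra_simps)
  have summable: "summable (\<lambda>j. heat_kernel t (z + int j + 2) * muA A \<epsilon> ^ (j + 2))" if "z \<ge> 0" for z
    using robin_tail_le(1)[OF Ae e False order_refl _ tail[of z]] that by simp
  have "robin_kernel A \<epsilon> t (x + n) y = robin_transform (muA A \<epsilon>) (\<lambda>s. heat_kernel t (s + n)) x y"
    by (simp add: robin_kernel_def robin_transform_def algebra_simps)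
  then show ?thesis
    using robin_transform_diff[OF _ summable] summable[of "x + n + y"] x y xn
    by (simp add: robin_kernel_eq_robin_transform add_ac)
qed

lemma robin_kernel_le:
  fixes x y :: int
  assumes Ae: "\<bar>A\<bar> * \<epsilon> \<le> 1/2" and e: "\<epsilon> > 0" and t: "t \<ge> 0" and b: "b \<ge> 0" and L: "L \<ge> 0"
    and rate: "b * diffusive_scale t + 2 * \<bar>A\<bar> * \<epsilon> \<le> L * diffusive_scale t"
    and x: "x \<ge> 0" and y: "y \<ge> 0"
  shows "\<bar>robin_kernel A \<epsilon> t x y\<bar>
           \<le> 74 * tilt_const L * diffusive_scale t * exp (-b * of_int \<bar>x - y\<bar> * diffusive_scale t)"
proof -
  have "\<bar>robin_transform (muA A \<epsilon>) (heat_kernel t) x y\<bar>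
        \<le> 37 * (tilt_const L * (2 * diffusive_scale t)) * exp (-(b * diffusive_scale t) * of_int \<bar>x - y\<bar>)"
    using rate b diffusive_scale_pos[of t]
    by (intro robin_transform_le[OF Ae e _ x y] heat_kernel_exp_decay[OF t L]) simp_all
  then show ?thesis
    by (simp add: robin_kernel_eq_robin_transform mult_ac)
qed

lemma robin_kernel_increment_le:
  fixes x y n :: int
  assumes Ae: "\<bar>A\<bar> * \<epsilon> \<le> 1/2" and e: "\<epsilon> > 0" and t: "t \<ge> 0" and b: "b \<ge> 0" and L: "L \<ge> 0"
    and rate: "b * diffusive_scale t + 2 * \<bar>A\<bar> * \<epsilon> \<le> L * diffusive_scale t"
    and x: "x \<ge> 0" and y: "y \<ge> 0" and xn: "x + n \<ge> 0"
    and n: "\<bar>of_int n\<bar> * diffusive_scale t \<le> 1"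
  shows "\<bar>robin_kernel A \<epsilon> t (x + n) y - robin_kernel A \<epsilon> t x y\<bar>
           \<le> 37 * tilt_const L * increment_const L * diffusive_scale t ^ 2 * \<bar>of_int n\<bar>
              * exp (-b * of_int \<bar>x - y\<bar> * diffusive_scale t)"
proof -
  have "\<bar>robin_transform (muA A \<epsilon>) (\<lambda>s. heat_kernel t (s + n) - heat_kernel t s) x y\<bar>
        \<le> 37 * (tilt_const L * (increment_const L * diffusive_scale t ^ 2 * \<bar>of_int n\<bar>))
            * exp (-(b * diffusive_scale t) * of_int \<bar>x - y\<bar>)"
    using rate b diffusive_scale_pos[of t]
    by (intro robin_transform_le[OF Ae e _ x y] heat_kernel_increment_exp_decay[OF t L _ n]) simp_all
  then show ?thesis
    by (simp add: robin_kernel_shift_diff[OF Ae e t x y xn] mult_ac)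
qed

section \<open>Hoelder continuity in the spatial variable\<close>

lemma exp_weight_shift_le:
  fixes x y n :: int and b m :: real
  assumes b: "b \<ge> 0" and m: "m \<ge> 0" and shift: "b * (m * \<bar>of_int n\<bar>) \<le> 2 * b"
  shows "exp (-b * of_int \<bar>x + n - y\<bar> * m) \<le> exp (2 * b) * exp (-b * of_int \<bar>x - y\<bar> * m)"
proof -
  have "of_int \<bar>x - y\<bar> \<le> of_int \<bar>x + n - y\<bar> + \<bar>real_of_int n\<bar>"
    by simp
  then have "b * m * of_int \<bar>x - y\<bar> \<le> b * m * (of_int \<bar>x + n - y\<bar> + \<bar>real_of_int n\<bar>)"
    using b m by (intro mult_left_mono) simp_all
  then show ?thesis
    using shift by (simp add: algebra_simps flip: exp_add)
qed

lemma robin_kernel_increment_le_sup: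
  fixes x y n :: int
  assumes Ae: "\<bar>A\<bar> * \<epsilon> \<le> 1/2" and e: "\<epsilon> > 0" and t: "t \<ge> 0" and b: "b \<ge> 0" and L: "L \<ge> 0"
    and rate: "b * diffusive_scale t + 2 * \<bar>A\<bar> * \<epsilon> \<le> L * diffusive_scale t"
    and x: "x \<ge> 0" and y: "y \<ge> 0" and xn: "x + n \<ge> 0"
    and shift: "b * (diffusive_scale t * \<bar>of_int n\<bar>) \<le> 2 * b"
  shows "\<bar>robin_kernel A \<epsilon> t (x + n) y - robin_kernel A \<epsilon> t x y\<bar>
           \<le> 148 * exp (2 * b) * tilt_const L * diffusive_scale t
              * exp (-b * of_int \<bar>x - y\<bar> * diffusive_scale t)"
proof -
  define m where "m = diffusive_scale t"
  define W where "W = exp (-b * of_int \<bar>x - y\<bar> * m)"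
  have m: "m > 0" and E: "tilt_const L > 0"
    by (simp_all add: m_def diffusive_scale_pos tilt_const_def)
  have "\<bar>robin_kernel A \<epsilon> t (x + n) y\<bar> \<le> 74 * tilt_const L * m * exp (-b * of_int \<bar>x + n - y\<bar> * m)"
    using robin_kernel_le[OF Ae e t b L rate xn y] by (simp add: m_def)
  also have "\<dots> \<le> 74 * tilt_const L * m * (exp (2 * b) * W)"
    using exp_weight_shift_le[OF b _ shift] E m by (intro mult_left_mono) (simp_all add: m_def W_def)
  finally have "\<bar>robin_kernel A \<epsilon> t (x + n) y\<bar> \<le> 74 * tilt_const L * m * (exp (2 * b) * W)" .
  moreover have "\<bar>robin_kernel A \<epsilon> t x y\<bar> \<le> 74 * tilt_const L * m * (1 * W)"
    using robin_kernel_le[OF Ae e t b L rate x y] by (simp add: m_def W_def)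
  moreover have "74 * tilt_const L * m * (1 * W) \<le> 74 * tilt_const L * m * (exp (2 * b) * W)"
    using b E m by (intro mult_left_mono mult_right_mono) (simp_all add: W_def)
  ultimately show ?thesis
    using abs_triangle_ineq4[of "robin_kernel A \<epsilon> t (x + n) y" "robin_kernel A \<epsilon> t x y"]
    by (simp add: m_def W_def algebra_simps)
qed

lemma robin_kernel_increment_holder:
  fixes x y n :: int
  assumes Ae: "\<bar>A\<bar> * \<epsilon> \<le> 1/2" and e: "\<epsilon> > 0" and t: "t \<ge> 0" and b: "b \<ge> 0" and L: "L \<ge> 0"
    and rate: "b * diffusive_scale t + 2 * \<bar>A\<bar> * \<epsilon> \<le> L * diffusive_scale t"
    and x: "x \<ge> 0" and y: "y \<ge> 0" and xn: "x + n \<ge> 0" and v: "0 \<le> v" "v \<le> 1"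
    and shift: "b * (diffusive_scale t * \<bar>of_int n\<bar>) \<le> 2 * b"
  shows "\<bar>robin_kernel A \<epsilon> t (x + n) y - robin_kernel A \<epsilon> t x y\<bar>
           \<le> 148 * exp (2 * b) * tilt_const L * increment_const L
              * (diffusive_scale t * (diffusive_scale t * \<bar>of_int n\<bar>) powr v)
              * exp (-b * of_int \<bar>x - y\<bar> * diffusive_scale t)"
proof -
  define m where "m = diffusive_scale t"
  define q where "q = m * \<bar>real_of_int n\<bar>"
  define W where "W = exp (-b * of_int \<bar>x - y\<bar> * m)"
  define E where "E = 148 * exp (2 * b) * tilt_const L"
  have m: "m > 0" and W: "W \<ge> 0" and K: "increment_const L \<ge> 16" and tilt: "tilt_const L > 0"
    using L by (simp_all add: m_def W_def diffusive_scale_pos increment_const_def tilt_const_def)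
  have "1 \<le> exp (2 * b)"
    using b by simp
  then have "37 \<le> 148 * exp (2 * b)"
    by linarith
  then have E: "E \<ge> 37 * tilt_const L"
    unfolding E_def by (intro mult_right_mono) (simp_all add: tilt_const_def)
  consider "n = 0" | "n \<noteq> 0" "q \<le> 1" | "q > 1"
    by fastforce
  then have "\<bar>robin_kernel A \<epsilon> t (x + n) y - robin_kernel A \<epsilon> t x y\<bar> \<le> E * increment_const L * (m * q powr v) * W"
  proof cases
    case 1
    then show ?thesis
      using m W E K by (simp add: q_def)
  next
    case 2
    then have "q powr 1 \<le> q powr v"
      using m v by (intro powr_mono') (simp_all add: q_def)
    then have "37 * tilt_const L * increment_const L * (m * q) * W \<le> E * increment_const L * (m * q powr v) * W"
      using 2 m W E K tilt by (intro mult_right_mono mult_mono) (simp_all add: q_def)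
    then show ?thesis
      using robin_kernel_increment_le[OF Ae e t b L rate x y xn] 2
      by (simp add: m_def q_def W_def power2_eq_square mult_ac)
  next
    case 3
    have "\<bar>robin_kernel A \<epsilon> t (x + n) y - robin_kernel A \<epsilon> t x y\<bar> \<le> E * 1 * (m * 1) * W"
      using robin_kernel_increment_le_sup[OF Ae e t b L rate x y xn shift]
      by (simp add: E_def m_def W_def)
    also have "\<dots> \<le> E * increment_const L * (m * q powr v) * W"
      using 3 v m W E K tilt
      by (intro mult_right_mono mult_mono ge_one_powr_ge_zero) simp_all
    finally show ?thesis .
  qed
  then show ?thesis
    by (simp add: E_def m_def q_def W_def)
qed

lemma min1_pow_half_eq_diffusive_scale_powr:
  fixes t a :: real assumes t: "t \<ge> 0" and a: "a \<ge> 0"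
  shows "min1_pow t (a / 2) = diffusive_scale t powr a"
proof (cases "t \<le> 1")
  case True
  have "1 \<le> t powr (-(a / 2))" if "t \<noteq> 0"
    using powr_le1[of "a / 2" t] True t a that by (simp add: powr_minus_divide)
  then show ?thesis
    using True by (auto simp: min1_pow_def diffusive_scale_def)
next
  case False
  have "t powr (-(a / 2)) \<le> 1"
    using ge_one_powr_ge_zero[of t "a / 2"] False a by (simp add: powr_minus_divide)
  then have "min1_pow t (a / 2) = t powr (-(a / 2))"
    using False by (simp add: min1_pow_def)
  also have "\<dots> = (t powr (-(1/2))) powr a"
    by (simp add: powr_powr)
  also have "t powr (-(1/2)) = diffusive_scale t"
    using False by (simp add: diffusive_scale_def powr_minus_divide powr_half_sqrt)
  finally show ?thesis .
qed

lemma small_epsilon_le: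
  fixes \<epsilon> A :: real
  assumes "0 < \<epsilon>" "\<epsilon> < 1 / (2 * \<bar>A\<bar> + 1)"
  shows "\<epsilon> \<le> 1" and "\<bar>A\<bar> * \<epsilon> \<le> 1/2"
proof -
  have "\<epsilon> + 2 * (\<bar>A\<bar> * \<epsilon>) < 1"
    using assms by (simp add: field_simps)
  moreover have "0 \<le> \<bar>A\<bar> * \<epsilon>"
    using assms by simp
  ultimately show "\<epsilon> \<le> 1" and "\<bar>A\<bar> * \<epsilon> \<le> 1/2"
    using assms(1) by linarith+
qed

lemma epsilon_le_diffusive_scale:
  fixes \<epsilon> t T :: real
  assumes e: "0 < \<epsilon>" "\<epsilon> \<le> 1" and t: "t \<ge> 0" and tT: "t \<le> T / \<epsilon>^2"
  shows "\<epsilon> \<le> max 1 (sqrt T) * diffusive_scale t"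
proof (cases "t \<le> 1")
  case True
  then show ?thesis
    using e by (simp add: diffusive_scale_def)
next
  case False
  have "sqrt (\<epsilon>^2 * t) \<le> sqrt T"
    using tT e by (simp add: field_simps)
  then have "\<epsilon> \<le> sqrt T / sqrt t"
    using e False by (simp add: real_sqrt_mult field_simps)
  then show ?thesis
    using False by (simp add: diffusive_scale_def divide_right_mono order_trans)
qed

lemma tilt_rate_le:
  fixes \<epsilon> t T :: real
  assumes "0 < \<epsilon>" "\<epsilon> \<le> 1" "t \<ge> 0" "t \<le> T / \<epsilon>^2"
  shows "b * diffusive_scale t + 2 * \<bar>A\<bar> * \<epsilon> \<le> (b + 2 * \<bar>A\<bar> * max 1 (sqrt T)) * diffusive_scale t"
proof -
  have "2 * \<bar>A\<bar> * \<epsilon> \<le> 2 * \<bar>A\<bar> * (max 1 (sqrt T) * diffusive_scale t)"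
    using epsilon_le_diffusive_scale[OF assms] by (intro mult_left_mono) simp_all
  then show ?thesis
    by (simp add: algebra_simps)
qed

lemma weight_shift_cost_le:
  fixes n :: int
  assumes t: "t \<ge> 0" and b: "b \<ge> 0" and n: "\<bar>n\<bar> \<le> \<lceil>sqrt t\<rceil> \<or> b = 0"
  shows "b * (diffusive_scale t * \<bar>of_int n\<bar>) \<le> 2 * b"
proof (cases "b = 0")
  case False
  then have "\<bar>of_int n\<bar> \<le> sqrt t + 1"
    using n by (metis of_int_abs of_int_ceiling_le_add_one of_int_le_iff order_trans)
  then have "diffusive_scale t * \<bar>of_int n\<bar> \<le> diffusive_scale t * (sqrt t + 1)"
    using diffusive_scale_pos[of t] by (intro mult_left_mono) simp_all
  also have "\<dots> \<le> 2"
    using t by (auto simp: diffusive_scale_def field_simps)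
  finally show ?thesis
    using b by (metis mult.commute mult_left_mono)
qed simp

lemma min1_pow_mult_powr_eq:
  fixes t v :: real and n :: int
  assumes "t \<ge> 0" "v \<ge> 0"
  shows "min1_pow t ((1 + v) / 2) * \<bar>real_of_int n\<bar> powr v
           = diffusive_scale t * (diffusive_scale t * \<bar>of_int n\<bar>) powr v"
proof -
  have "min1_pow t ((1 + v) / 2) = diffusive_scale t powr (1 + v)"
    using assms by (simp add: min1_pow_half_eq_diffusive_scale_powr)
  also have "\<dots> = diffusive_scale t * diffusive_scale t powr v"
    using diffusive_scale_pos[of t] by (simp add: powr_add)
  finally show ?thesis
    using diffusive_scale_pos[of t] by (simp add: powr_mult)
qed

theorem mainTheorem5:
  fixes A T b :: real
  assumes "T > 0" and "b \<ge> 0"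
  shows "\<exists>C. \<exists>\<epsilon>0 > 0. \<forall>\<epsilon>. 0 < \<epsilon> \<and> \<epsilon> < \<epsilon>0 \<longrightarrow>
     (\<forall>t v. \<forall>x y n :: int.
        0 \<le> t \<and> t \<le> T / \<epsilon>\<^sup>2 \<and> 0 \<le> v \<and> v \<le> 1 \<and> 0 \<le> x \<and> 0 \<le> y \<and> 0 \<le> x + n \<and>
        (\<bar>n\<bar> \<le> \<lceil>sqrt t\<rceil> \<or> b = 0) \<longrightarrow>
        \<bar>robin_kernel A \<epsilon> t (x + n) y - robin_kernel A \<epsilon> t x y\<bar>
          \<le> C * min1_pow t ((1 + v) / 2) * \<bar>real_of_int n\<bar> powr v
              * exp (- b * real_of_int \<bar>x - y\<bar> * min1_pow t (1 / 2)))"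
proof -
  define L where "L = b + 2 * \<bar>A\<bar> * max 1 (sqrt T)"
  define C where "C = 148 * exp (2 * b) * tilt_const L * increment_const L"
  define \<epsilon>0 where "\<epsilon>0 = 1 / (2 * \<bar>A\<bar> + 1)"
  have L: "L \<ge> 0"
    using assms by (simp add: L_def)
  show ?thesis
  proof (rule exI[of _ C], rule exI[of _ \<epsilon>0], intro conjI allI impI)
    show "\<epsilon>0 > 0"
      by (simp add: \<epsilon>0_def add_pos_nonneg)
    fix \<epsilon> t v :: real and x y n :: int
    assume e: "0 < \<epsilon> \<and> \<epsilon> < \<epsilon>0"
      and h: "0 \<le> t \<and> t \<le> T / \<epsilon>\<^sup>2 \<and> 0 \<le> v \<and> v \<le> 1 \<and> 0 \<le> x \<and> 0 \<le> y \<and> 0 \<le> x + n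
              \<and> (\<bar>n\<bar> \<le> \<lceil>sqrt t\<rceil> \<or> b = 0)"
    have Ae: "\<bar>A\<bar> * \<epsilon> \<le> 1/2" and e1: "\<epsilon> \<le> 1"
      using small_epsilon_le[of \<epsilon> A] e by (simp_all add: \<epsilon>0_def)
    have rate: "b * diffusive_scale t + 2 * \<bar>A\<bar> * \<epsilon> \<le> L * diffusive_scale t"
      using tilt_rate_le[of \<epsilon> t T b A] e e1 h by (simp add: L_def)
    show "\<bar>robin_kernel A \<epsilon> t (x + n) y - robin_kernel A \<epsilon> t x y\<bar>
          \<le> C * min1_pow t ((1 + v) / 2) * \<bar>real_of_int n\<bar> powr v
              * exp (- b * real_of_int \<bar>x - y\<bar> * min1_pow t (1 / 2))"
      using robin_kernel_increment_holder[OF Ae _ _ assms(2) L rate, of x y n v]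
        weight_shift_cost_le[OF _ assms(2), of t n] min1_pow_mult_powr_eq[of t v n]
        min1_pow_half_eq_diffusive_scale_powr[of t 1] diffusive_scale_pos[of t] e h
      by (simp add: C_def mult.assoc)
  qed
qed

end
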